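(* Under the hypotheses of the previous statement (with $P$ analytic in $\{\operatorname{Re}z>0\}$, $a>0$, $|P(z)|<M(\delta)e^{-a|z|}$ on $S(-\tfrac{\pi}{2}+\delta,\tfrac{\pi}{2}-\delta)$ for each $\delta\in(0,\tfrac{\pi}{2})$), let $F$ be the entire function that coincides with $F_\theta(t)=\int_{\arg z=\theta}e^{zt}P(z)\,dz$ on $\Pi_{\theta,a}$ for every $\theta\in(-\tfrac{\pi}{2},\tfrac{\pi}{2})$. Then for every $\delta\in(0,\tfrac{\pi}{2})$, $$|F(t)|\le \frac{2M(\delta)}{a}\quad\text{for all } t\in \overline{\Pi_{\pi/2-\delta,a/2}}\cup\overline{\Pi_{-\pi/2+\delta,a/2}},$$ i.e. outside the open sector with apex $\frac{a}{2\sin\delta}$ on the positive real axis, symmetric about the real axis, with half-opening $\delta$, containing $(\frac{a}{2\sin\delta},+\infty)$. In particular $|F(|t|e^{\pm i\delta})|\le 2M(\delta)/a$ for all $t$. Moreover $F(t)\to0$ as $t\to-\infty$ along the real axis.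
   Context: For $\alpha<\beta$, $S(\alpha,\beta)=\{z\in\mathbb{C}:0<|z|<\infty,\ \alpha<\arg z<\beta\}$. For $\theta\in(-\tfrac{\pi}{2},\tfrac{\pi}{2})$ and $c>0$, $\Pi_{\theta,c}=\{t=\sigma+i\tau:\ \sigma\cos\theta-\tau\sin\theta<c\}$, and $\overline{\Pi_{\theta,c}}$ is its closure. *)

theory Defs
  imports "HOL-Analysis.Analysis"
begin

text \<open>Open sector S(alpha,beta) = {z : 0 < |z| < infinity, alpha < arg z < beta}
  (principal argument, suitable for -pi < alpha < beta <= pi).\<close>
definition sector :: "real \<Rightarrow> real \<Rightarrow> complex set" where
  "sector \<alpha> \<beta> = {z. z \<noteq> 0 \<and> \<alpha> < Arg z \<and> Arg z < \<beta>}"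

definition halfplane :: "real \<Rightarrow> real \<Rightarrow> complex set" where
  "halfplane \<theta> c = {t. Re t * cos \<theta> - Im t * sin \<theta> < c}"

text \<open>F_theta(t) = integral over the ray arg z = theta (from 0 to infinity) of e^{zt} P(z) dz,
  parametrised by z = r e^{i theta}, dz = e^{i theta} dr.\<close>
definition ray_laplace :: "(complex \<Rightarrow> complex) \<Rightarrow> real \<Rightarrow> complex \<Rightarrow> complex" where
  "ray_laplace P \<theta> t =
     integral {0<..} (\<lambda>r::real. exp (of_real r * cis \<theta> * t) * P (of_real r * cis \<theta>) * cis \<theta>)"

end

theory Submission
  imports Defs "HOL-Real_Asymp.Real_Asymp"
begin

text \<open>On the ray arg z = \<theta> the integrand of F_\<theta>(t) has modulus at most
  M exp(-(a - b) r) with b = Re(e^(i\<theta>) t), so |F_\<theta>(t)| \<le> M/(a - b), which is 2M/a on the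
  closed half-plane b \<le> a/2. By continuity the bound on P persists on the boundary rays
  \<theta> = \<plusminus>(\<pi>/2 - \<delta>) of the sector, and the two corresponding half-planes cover the complement
  of the sector in the statement. For \<theta> = 0 and real t = x the same estimate reads
  |F(x)| \<le> M/(a - x), which tends to 0 as x \<rightarrow> -\<infinity>.\<close>

lemma halfplane_eq: "halfplane \<theta> c = {t. Re (cis \<theta> * t) < c}"
  by (auto simp: halfplane_def algebra_simps)

lemma closure_halfplane_subset: "closure (halfplane \<theta> c) \<subseteq> {t. Re (cis \<theta> * t) \<le> c}"
  unfolding halfplane_eq by (intro closure_minimal closed_Collect_le continuous_intros) auto

lemma closure_halfplane_subset_halfplane:
  assumes "c < d"
  shows "closure (halfplane \<theta> c) \<subseteq> halfplane \<theta> d"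
  using closure_halfplane_subset assms by (fastforce simp: halfplane_eq)

lemma ray_in_halfplane:
  assumes "cos (\<theta> + \<phi>) = 0" "c > 0"
  shows "of_real r * cis \<phi> \<in> halfplane \<theta> c"
proof -
  have "Re (of_real r * cis \<phi>) * cos \<theta> - Im (of_real r * cis \<phi>) * sin \<theta> = r * cos (\<theta> + \<phi>)"
    by (simp add: cos_add algebra_simps)
  also have "\<dots> = 0"
    using assms by simp
  finally have on_boundary: "Re (of_real r * cis \<phi>) * cos \<theta> - Im (of_real r * cis \<phi>) * sin \<theta> = 0" .
  show ?thesis
    unfolding halfplane_def mem_Collect_eq on_boundary using assms by simp
qed

lemma norm_le_on_closed_sector:
  fixes P :: "complex \<Rightarrow> complex"
  assumes contP: "continuous_on {z. Re z > 0} P"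
    and "-pi/2 < \<alpha>" "\<alpha> < \<beta>" "\<beta> < pi/2"
    and P_le: "\<And>z. z \<in> sector \<alpha> \<beta> \<Longrightarrow> cmod (P z) \<le> M * exp (- a * cmod z)"
    and "r > 0" "\<phi> \<in> {\<alpha>..\<beta>}"
  shows "cmod (P (of_real r * cis \<phi>)) \<le> M * exp (- a * r)"
proof -
  have closure_eq: "closure {\<alpha><..<\<beta>} = {\<alpha>..\<beta>}"
    using \<open>\<alpha> < \<beta>\<close> by simp
  have "continuous_on {\<alpha>..\<beta>} (\<lambda>\<phi>. P (of_real r * cis \<phi>))"
  proof (rule continuous_on_compose2[OF contP])
    show "(\<lambda>\<phi>. of_real r * cis \<phi>) ` {\<alpha>..\<beta>} \<subseteq> {z. Re z > 0}"
      using assms by (auto intro!: mult_pos_pos cos_gt_zero_pi)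
  qed (intro continuous_intros)
  then have "continuous_on (closure {\<alpha><..<\<beta>}) (\<lambda>\<phi>. cmod (P (of_real r * cis \<phi>)))"
    unfolding closure_eq by (intro continuous_intros)
  then show ?thesis
  proof (rule continuous_le_on_closure)
    fix x assume x: "x \<in> {\<alpha><..<\<beta>}"
    then have "Arg (of_real r * cis x) = x"
      using assms by (simp add: Arg_cis)
    then have "of_real r * cis x \<in> sector \<alpha> \<beta>"
      using x \<open>r > 0\<close> by (simp add: sector_def)
    then show "cmod (P (of_real r * cis x)) \<le> M * exp (- a * r)"
      using P_le \<open>r > 0\<close> by (fastforce simp: norm_mult)
  qed (use assms closure_eq in simp)
qed

lemma has_integral_exp_minus_to_infinity_open:
  assumes "a > 0"
  shows "((\<lambda>x::real. exp (-a*x)) has_integral exp (-a*c)/a) {c<..}"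
proof -
  have "((\<lambda>x::real. exp (-a*x)) has_integral exp (-a*c)/a) {c..}"
    using assms by (rule has_integral_exp_minus_to_infinity)
  moreover have "negligible {c}" by simp
  ultimately show ?thesis
    by (subst (asm) has_integral_spike_set_eq[where T = "{c<..}"])
       (auto intro: negligible_subset[of "{c}"])
qed

lemma norm_ray_laplace_le:
  fixes P :: "complex \<Rightarrow> complex"
  assumes P_le: "\<And>r. r > 0 \<Longrightarrow> cmod (P (of_real r * cis \<theta>)) \<le> K * exp (- a * r)"
    and t: "Re (cis \<theta> * t) \<le> b" and "b < a"
  shows "cmod (ray_laplace P \<theta> t) \<le> K / (a - b)"
proof -
  define f where "f = (\<lambda>r::real. exp (of_real r * cis \<theta> * t) * P (of_real r * cis \<theta>) * cis \<theta>)"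
  have ray_laplace_eq: "ray_laplace P \<theta> t = integral {0<..} f"
    unfolding ray_laplace_def f_def ..
  \<comment> \<open>needed when f is not integrable and the integral is junk 0\<close>
  have "cmod (P (cis \<theta>)) \<le> K * exp (- a)"
    using P_le[of 1] by simp
  then have "0 \<le> K * exp (- a)"
    by (rule order_trans[OF norm_ge_zero])
  then have "K \<ge> 0"
    by (simp add: zero_le_mult_iff)
  have majorant: "((\<lambda>r. K * exp (-(a-b)*r)) has_integral K / (a-b)) {0<..}"
    using has_integral_exp_minus_to_infinity_open[of "a-b" 0] \<open>b < a\<close>
    by (auto dest: has_integral_mult_right[where c = K])
  have f_le: "cmod (f r) \<le> K * exp (-(a-b)*r)" if "r \<in> {0<..}" for r
  proof -
    have "cmod (f r) = exp (r * Re (cis \<theta> * t)) * cmod (P (of_real r * cis \<theta>))"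
      by (simp add: f_def norm_mult mult.assoc)
    also have "\<dots> \<le> exp (r * b) * (K * exp (- a * r))"
      using that t by (intro mult_mono P_le) auto
    also have "\<dots> = K * exp (-(a-b)*r)"
      by (simp add: exp_add[symmetric] algebra_simps)
    finally show ?thesis .
  qed
  show ?thesis
  proof (cases "f integrable_on {0<..}")
    case True
    then have "cmod (integral {0<..} f) \<le> integral {0<..} (\<lambda>r. K * exp (-(a-b)*r))"
      using majorant f_le by (intro integral_norm_bound_integral) auto
    then show ?thesis
      using integral_unique[OF majorant] by (simp add: ray_laplace_eq)
  next
    case False
    then show ?thesis
      using \<open>K \<ge> 0\<close> \<open>b < a\<close> by (simp add: ray_laplace_eq not_integrable_integral)
  qed
qed

lemma norm_ray_laplace_le_on_closed_halfplane:
  fixes P :: "complex \<Rightarrow> complex"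
  assumes contP: "continuous_on {z. Re z > 0} P"
    and "-pi/2 < \<alpha>" "\<alpha> < \<beta>" "\<beta> < pi/2"
    and P_le: "\<And>z. z \<in> sector \<alpha> \<beta> \<Longrightarrow> cmod (P z) \<le> M * exp (- a * cmod z)"
    and "\<theta> \<in> {\<alpha>..\<beta>}" "a > 0" "t \<in> closure (halfplane \<theta> (a/2))"
  shows "cmod (ray_laplace P \<theta> t) \<le> 2 * M / a"
proof -
  have "Re (cis \<theta> * t) \<le> a/2"
    using closure_halfplane_subset \<open>t \<in> closure (halfplane \<theta> (a/2))\<close> by blast
  then have "cmod (ray_laplace P \<theta> t) \<le> M / (a - a/2)"
    using norm_le_on_closed_sector[OF assms(1-5) _ \<open>\<theta> \<in> {\<alpha>..\<beta>}\<close>] \<open>a > 0\<close>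
    by (intro norm_ray_laplace_le) auto
  then show ?thesis
    by (simp add: mult.commute)
qed

lemma ray_laplace_tendsto_zero_at_bot:
  fixes P :: "complex \<Rightarrow> complex"
  assumes "\<And>r. r > 0 \<Longrightarrow> cmod (P (of_real r)) \<le> K * exp (- a * r)"
  shows "((\<lambda>x::real. ray_laplace P 0 (of_real x)) \<longlongrightarrow> 0) at_bot"
proof (rule Lim_null_comparison)
  show "\<forall>\<^sub>F x in at_bot. cmod (ray_laplace P 0 (of_real x)) \<le> K / (a - x)"
    using eventually_gt_at_bot[of a]
    by eventually_elim (rule norm_ray_laplace_le, use assms in auto)
  show "((\<lambda>x. K / (a - x)) \<longlongrightarrow> 0) at_bot"
    by real_asymp
qed

theorem mainTheorem6:
  fixes P F :: "complex \<Rightarrow> complex" and M :: "real \<Rightarrow> real" and a :: real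
  assumes holP: "P holomorphic_on {z. Re z > 0}"
    and apos: "a > 0"
    and bound: "\<And>\<delta> z. \<delta> \<in> {0<..<pi/2} \<Longrightarrow> z \<in> sector (-pi/2 + \<delta>) (pi/2 - \<delta>) \<Longrightarrow>
                  cmod (P z) < M \<delta> * exp (- a * cmod z)"
    and entF: "F holomorphic_on UNIV"
    and coincide: "\<And>\<theta> t. \<theta> \<in> {-pi/2<..<pi/2} \<Longrightarrow> t \<in> halfplane \<theta> a \<Longrightarrow>
                  F t = ray_laplace P \<theta> t"
  shows "(\<forall>\<delta>\<in>{0<..<pi/2}. \<forall>t \<in> closure (halfplane (pi/2 - \<delta>) (a/2))
                                    \<union> closure (halfplane (-pi/2 + \<delta>) (a/2)).
            cmod (F t) \<le> 2 * M \<delta> / a)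
       \<and> (\<forall>\<delta>\<in>{0<..<pi/2}. \<forall>t::complex.
            cmod (F (of_real (cmod t) * cis \<delta>)) \<le> 2 * M \<delta> / a \<and>
            cmod (F (of_real (cmod t) * cis (- \<delta>))) \<le> 2 * M \<delta> / a)
       \<and> ((\<lambda>x::real. F (of_real x)) \<longlongrightarrow> 0) at_bot"
proof -
  have F_le: "cmod (F t) \<le> 2 * M \<delta> / a"
    if \<delta>: "\<delta> \<in> {0<..<pi/2}" and \<theta>: "\<theta> \<in> {-pi/2 + \<delta>..pi/2 - \<delta>}"
      and t: "t \<in> closure (halfplane \<theta> (a/2))" for \<delta> \<theta> t
  proof -
    have "F t = ray_laplace P \<theta> t"
      using \<delta> \<theta> t apos closure_halfplane_subset_halfplane[of "a/2" a \<theta>] by (intro coincide) auto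
    also have "cmod \<dots> \<le> 2 * M \<delta> / a"
      using \<delta> \<theta> t apos bound[OF \<delta>]
      by (intro norm_ray_laplace_le_on_closed_halfplane[OF holomorphic_on_imp_continuous_on[OF holP]])
         (auto intro: less_imp_le)
    finally show ?thesis .
  qed
  have outside_sector: "\<forall>\<delta>\<in>{0<..<pi/2}. \<forall>t \<in> closure (halfplane (pi/2 - \<delta>) (a/2))
                                    \<union> closure (halfplane (-pi/2 + \<delta>) (a/2)).
            cmod (F t) \<le> 2 * M \<delta> / a"
  proof (intro ballI)
    fix \<delta> t
    assume "\<delta> \<in> {0<..<pi/2}"
      and "t \<in> closure (halfplane (pi/2 - \<delta>) (a/2)) \<union> closure (halfplane (-pi/2 + \<delta>) (a/2))"
    then show "cmod (F t) \<le> 2 * M \<delta> / a"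
      using F_le[of \<delta> "pi/2 - \<delta>" t] F_le[of \<delta> "-pi/2 + \<delta>" t] by auto
  qed
  moreover have "\<forall>\<delta>\<in>{0<..<pi/2}. \<forall>t::complex.
            cmod (F (of_real (cmod t) * cis \<delta>)) \<le> 2 * M \<delta> / a \<and>
            cmod (F (of_real (cmod t) * cis (- \<delta>))) \<le> 2 * M \<delta> / a"
  proof (intro ballI allI)
    fix \<delta> and t :: complex
    assume "\<delta> \<in> {0<..<pi/2}"
    moreover have "of_real (cmod t) * cis \<delta> \<in> halfplane (pi/2 - \<delta>) (a/2)"
      and "of_real (cmod t) * cis (- \<delta>) \<in> halfplane (-pi/2 + \<delta>) (a/2)"
      using apos by (intro ray_in_halfplane; simp)+
    ultimately show "cmod (F (of_real (cmod t) * cis \<delta>)) \<le> 2 * M \<delta> / a \<and>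
        cmod (F (of_real (cmod t) * cis (- \<delta>))) \<le> 2 * M \<delta> / a"
      using outside_sector closure_subset by blast
  qed
  moreover have "((\<lambda>x::real. F (of_real x)) \<longlongrightarrow> 0) at_bot"
  proof (rule Lim_transform_eventually)
    have "cmod (P (of_real r)) \<le> M (pi/4) * exp (- a * r)" if "r > 0" for r
      using bound[of "pi/4" "of_real r"] that by (simp add: sector_def)
    then show "((\<lambda>x::real. ray_laplace P 0 (of_real x)) \<longlongrightarrow> 0) at_bot"
      by (rule ray_laplace_tendsto_zero_at_bot)
    show "\<forall>\<^sub>F x in at_bot. ray_laplace P 0 (of_real x) = F (of_real x)"
      using eventually_gt_at_bot[of a]
      by eventually_elim (rule coincide[symmetric], auto simp: halfplane_def)
  qed
  ultimately show ?thesis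
    by blast
qed

end
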